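(* The class $\mathcal{P}$ of positive MV-algebras is not closed under homomorphic images, hence is not a variety. Specifically, let $\mathbf{C}$ be the Chang MV-algebra with least positive infinitesimal $\epsilon$, and let $\mathbf{C}'$ be the subset $\{0,\epsilon,2\epsilon,\dots\}\cup\{1\}$, which is closed under $\oplus,\odot,\vee,\wedge,0,1$; the equivalence relation $\theta$ on $\mathbf{C}'$ with classes $\{0\}$, $\{n\epsilon\mid n\ge 1\}$, $\{1\}$ is a congruence of $\mathbf{C}'$, and $\mathbf{C}'/\theta$ is not a positive MV-algebra.
   Context: A \emph{positive MV-algebra} is an algebra of type $\{\oplus,\odot,\vee,\wedge,0,1\}$ isomorphic to a subalgebra of the $\{\oplus,\odot,\vee,\wedge,0,1\}$-reduct of some MV-algebra, where MV-algebras are taken with the derived operations $1=\neg 0$, $x\odot y=\neg(\neg x\oplus\neg y)$, $x\vee y=(x\odot\neg y)\oplus y$, $x\wedge y=\neg(\neg x\vee\neg y)$. The Chang algebra $\mathbf{C}$ has universe $\{n\epsilon\mid n\in\mathbb{N}\}\cup\{1-n\epsilon\mid n\in\mathbb{N}\}$, realized as $\Gamma(\mathbb{Z}\times_{\mathrm{lex}}\mathbb{Z},(1,0))$ with $\epsilon=(0,1)$. *)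

theory Defs
  imports Main
begin

definition mv_algebra :: "'a set \<Rightarrow> ('a \<Rightarrow> 'a \<Rightarrow> 'a) \<Rightarrow> ('a \<Rightarrow> 'a) \<Rightarrow> 'a \<Rightarrow> bool" where
  "mv_algebra A oplus neg z \<longleftrightarrow>
     z \<in> A \<and> (\<forall>x\<in>A. neg x \<in> A) \<and> (\<forall>x\<in>A. \<forall>y\<in>A. oplus x y \<in> A) \<and>
     (\<forall>x\<in>A. \<forall>y\<in>A. \<forall>w\<in>A. oplus (oplus x y) w = oplus x (oplus y w)) \<and>
     (\<forall>x\<in>A. \<forall>y\<in>A. oplus x y = oplus y x) \<and>
     (\<forall>x\<in>A. oplus x z = x) \<and>
     (\<forall>x\<in>A. neg (neg x) = x) \<and>
     (\<forall>x\<in>A. oplus x (neg z) = neg z) \<and>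
     (\<forall>x\<in>A. \<forall>y\<in>A. oplus (neg (oplus (neg x) y)) y = oplus (neg (oplus (neg y) x)) x)"

record 'a palg =
  pcarrier :: "'a set"
  pplus :: "'a \<Rightarrow> 'a \<Rightarrow> 'a"
  ptimes :: "'a \<Rightarrow> 'a \<Rightarrow> 'a"
  pjoin :: "'a \<Rightarrow> 'a \<Rightarrow> 'a"
  pmeet :: "'a \<Rightarrow> 'a \<Rightarrow> 'a"
  pzero :: 'a
  pone :: 'a

definition mv_reduct :: "'a set \<Rightarrow> ('a \<Rightarrow> 'a \<Rightarrow> 'a) \<Rightarrow> ('a \<Rightarrow> 'a) \<Rightarrow> 'a \<Rightarrow> 'a palg" where
  "mv_reduct A oplus neg z =
     (let odot = (\<lambda>x y. neg (oplus (neg x) (neg y)));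
          join = (\<lambda>x y. oplus (odot x (neg y)) y)
      in \<lparr> pcarrier = A, pplus = oplus, ptimes = odot, pjoin = join,
           pmeet = (\<lambda>x y. neg (join (neg x) (neg y))), pzero = z, pone = neg z \<rparr>)"

definition palg_hom :: "'a palg \<Rightarrow> 'b palg \<Rightarrow> ('a \<Rightarrow> 'b) \<Rightarrow> bool" where
  "palg_hom S T h \<longleftrightarrow>
     h ` pcarrier S \<subseteq> pcarrier T \<and>
     (\<forall>x\<in>pcarrier S. \<forall>y\<in>pcarrier S.
        h (pplus S x y) = pplus T (h x) (h y) \<and>
        h (ptimes S x y) = ptimes T (h x) (h y) \<and>
        h (pjoin S x y) = pjoin T (h x) (h y) \<and>
        h (pmeet S x y) = pmeet T (h x) (h y)) \<and>
     h (pzero S) = pzero T \<and> h (pone S) = pone T"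

definition palg_embedding :: "'a palg \<Rightarrow> 'b palg \<Rightarrow> ('a \<Rightarrow> 'b) \<Rightarrow> bool" where
  "palg_embedding S T h \<longleftrightarrow> palg_hom S T h \<and> inj_on h (pcarrier S)"

text \<open>S is a positive MV-algebra, witnessed by an MV-algebra living on type 'b.
  (S is positive iff this holds for some type 'b; in particular, S is not positive
  iff it fails for every type 'b.)\<close>
definition positive_MV_in :: "'b itself \<Rightarrow> 'a palg \<Rightarrow> bool" where
  "positive_MV_in (_ :: 'b itself) S \<longleftrightarrow>
     (\<exists>(A :: 'b set) oplus neg z h. mv_algebra A oplus neg z \<and>
        palg_embedding S (mv_reduct A oplus neg z) h)"

definition palg_closed :: "'a palg \<Rightarrow> 'a set \<Rightarrow> bool" where
  "palg_closed S B \<longleftrightarrow> B \<subseteq> pcarrier S \<and> pzero S \<in> B \<and> pone S \<in> B \<and>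
     (\<forall>x\<in>B. \<forall>y\<in>B. pplus S x y \<in> B \<and> ptimes S x y \<in> B \<and> pjoin S x y \<in> B \<and> pmeet S x y \<in> B)"

definition palg_sub :: "'a palg \<Rightarrow> 'a set \<Rightarrow> 'a palg" where
  "palg_sub S B = S\<lparr>pcarrier := B\<rparr>"

definition palg_congruence :: "'a palg \<Rightarrow> ('a \<times> 'a) set \<Rightarrow> bool" where
  "palg_congruence S \<theta> \<longleftrightarrow> equiv (pcarrier S) \<theta> \<and>
     (\<forall>x x' y y'. (x, x') \<in> \<theta> \<longrightarrow> (y, y') \<in> \<theta> \<longrightarrow>
        (pplus S x y, pplus S x' y') \<in> \<theta> \<and> (ptimes S x y, ptimes S x' y') \<in> \<theta> \<and>
        (pjoin S x y, pjoin S x' y') \<in> \<theta> \<and> (pmeet S x y, pmeet S x' y') \<in> \<theta>)"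

definition quot_op :: "('a \<times> 'a) set \<Rightarrow> ('a \<Rightarrow> 'a \<Rightarrow> 'a) \<Rightarrow> 'a set \<Rightarrow> 'a set \<Rightarrow> 'a set" where
  "quot_op \<theta> f X Y = (\<Union>x\<in>X. \<Union>y\<in>Y. \<theta> `` {f x y})"

definition palg_quotient :: "'a palg \<Rightarrow> ('a \<times> 'a) set \<Rightarrow> 'a set palg" where
  "palg_quotient S \<theta> =
     \<lparr> pcarrier = pcarrier S // \<theta>,
       pplus = quot_op \<theta> (pplus S), ptimes = quot_op \<theta> (ptimes S),
       pjoin = quot_op \<theta> (pjoin S), pmeet = quot_op \<theta> (pmeet S),
       pzero = \<theta> `` {pzero S}, pone = \<theta> `` {pone S} \<rparr>"

section \<open>The Chang algebra C = Gamma(Z \<times>lex Z, (1,0)), epsilon = (0,1)\<close>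

definition lex_le :: "int \<times> int \<Rightarrow> int \<times> int \<Rightarrow> bool" where
  "lex_le p q \<longleftrightarrow> fst p < fst q \<or> (fst p = fst q \<and> snd p \<le> snd q)"

definition chang_carrier :: "(int \<times> int) set" where
  "chang_carrier = {p. lex_le (0, 0) p \<and> lex_le p (1, 0)}"

definition chang_oplus :: "int \<times> int \<Rightarrow> int \<times> int \<Rightarrow> int \<times> int" where
  "chang_oplus p q = (let s = (fst p + fst q, snd p + snd q) in
                      if lex_le s (1, 0) then s else (1, 0))"

definition chang_neg :: "int \<times> int \<Rightarrow> int \<times> int" where
  "chang_neg p = (1 - fst p, - snd p)"

definition Chang :: "(int \<times> int) palg" where
  "Chang = mv_reduct chang_carrier chang_oplus chang_neg (0, 0)"

definition chang_sub :: "(int \<times> int) set" where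
  "chang_sub = {(0, int n) | n. True} \<union> {(1, 0)}"

definition chang_theta :: "((int \<times> int) \<times> (int \<times> int)) set" where
  "chang_theta =
     {((0,0),(0,0))} \<union>
     {(p, q). p \<in> {(0, int n) | n. n \<ge> 1} \<and> q \<in> {(0, int n) | n. n \<ge> 1}} \<union>
     {((1,0),(1,0))}"

end

theory Submission imports Defs begin

text \<open>In \<open>C'/\<theta>\<close> the class \<open>[\<epsilon>]\<close> satisfies \<open>[\<epsilon>] \<oplus> [\<epsilon>] = [2\<epsilon>] = [\<epsilon>]\<close> and
  \<open>[\<epsilon>] \<odot> [\<epsilon>] = [0]\<close>, but in an MV-algebra the only \<open>a\<close> with \<open>a \<oplus> a = a\<close> and \<open>a \<odot> a = 0\<close> is
  \<open>0\<close>: the axiom \<open>\<not>(\<not>x \<oplus> y) \<oplus> y = \<not>(\<not>y \<oplus> x) \<oplus> x\<close> at \<open>x = \<not>a, y = a\<close> gives \<open>\<not>a \<oplus> a = \<not>a\<close>,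
  while \<open>\<not>a \<oplus> a = 1\<close> holds for every \<open>a\<close>. So no embedding into an MV-algebra can keep \<open>[\<epsilon>]\<close>
  apart from \<open>[0]\<close>.\<close>

lemma mv_algebra_oplus_neg_self:
  assumes mv: "mv_algebra A oplus neg z" and x: "x \<in> A"
  shows "oplus (neg x) x = neg z"
proof -
  have cm: "oplus z x = x"
    and nn: "neg (neg z) = z"
    and ab: "oplus (neg x) (neg z) = neg z" "oplus z (neg z) = neg z"
    and ax: "oplus (neg (oplus (neg x) (neg z))) (neg z) = oplus (neg (oplus (neg (neg z)) x)) x"
    using mv x unfolding mv_algebra_def by metis+
  show ?thesis
    using ax by (simp add: ab nn cm)
qed

lemma mv_algebra_idempotent_nilpotent_eq_zero:
  assumes mv: "mv_algebra A oplus neg z" and a: "a \<in> A"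
    and idem: "oplus a a = a" and nilp: "neg (oplus (neg a) (neg a)) = z"
  shows "a = z"
proof -
  have zA: "z \<in> A" and un: "oplus z (neg a) = neg a"
    and nn: "\<And>x. x \<in> A \<Longrightarrow> neg (neg x) = x"
    and ax: "oplus (neg (oplus (neg (neg a)) a)) a = oplus (neg (oplus (neg a) (neg a))) (neg a)"
    using mv a unfolding mv_algebra_def by metis+
  have "oplus (neg a) a = neg a"
    using ax by (simp add: nn[OF a] idem nilp un)
  then have "neg a = neg z"
    using mv_algebra_oplus_neg_self[OF mv a] by simp
  then show "a = z"
    using nn[OF a] nn[OF zA] by metis
qed

lemma palg_sub_simps [simp]:
  "pcarrier (palg_sub S B) = B" "pplus (palg_sub S B) = pplus S" "ptimes (palg_sub S B) = ptimes S"
  "pjoin (palg_sub S B) = pjoin S" "pmeet (palg_sub S B) = pmeet S"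
  "pzero (palg_sub S B) = pzero S" "pone (palg_sub S B) = pone S"
  by (simp_all add: palg_sub_def)

lemma mv_reduct_simps [simp]:
  "pcarrier (mv_reduct A oplus neg z) = A" "pplus (mv_reduct A oplus neg z) = oplus"
  "ptimes (mv_reduct A oplus neg z) x y = neg (oplus (neg x) (neg y))"
  "pjoin (mv_reduct A oplus neg z) x y = oplus (neg (oplus (neg x) (neg (neg y)))) y"
  "pmeet (mv_reduct A oplus neg z) x y =
     neg (oplus (neg (oplus (neg (neg x)) (neg (neg (neg y))))) (neg y))"
  "pzero (mv_reduct A oplus neg z) = z" "pone (mv_reduct A oplus neg z) = neg z"
  by (simp_all add: mv_reduct_def Let_def)

lemma positive_MV_in_mv_subalgebra:
  fixes A :: "'a set"
  assumes "palg_closed (mv_reduct A oplus neg z) B" and "mv_algebra A oplus neg z"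
  shows "positive_MV_in TYPE('a) (palg_sub (mv_reduct A oplus neg z) B)"
proof -
  have "palg_embedding (palg_sub (mv_reduct A oplus neg z) B) (mv_reduct A oplus neg z) id"
    using assms(1) by (auto simp: palg_embedding_def palg_hom_def palg_closed_def)
  with assms(2) show ?thesis
    unfolding positive_MV_in_def by metis
qed

lemma not_positive_MV_in_if_idempotent_nilpotent:
  assumes zero: "pzero S \<in> pcarrier S" and e: "e \<in> pcarrier S" and nonzero: "e \<noteq> pzero S"
    and idem: "pplus S e e = e" and nilp: "ptimes S e e = pzero S"
  shows "\<not> positive_MV_in TYPE('b) S"
proof
  assume "positive_MV_in TYPE('b) S"
  then obtain A :: "'b set" and oplus neg z h where mv: "mv_algebra A oplus neg z"
    and hom: "palg_hom S (mv_reduct A oplus neg z) h" and inj: "inj_on h (pcarrier S)"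
    unfolding positive_MV_in_def palg_embedding_def by blast
  have "h e \<in> A" and "h (pzero S) = z"
    using hom e unfolding palg_hom_def by auto
  moreover have "h (pplus S e e) = oplus (h e) (h e)"
    and "h (ptimes S e e) = neg (oplus (neg (h e)) (neg (h e)))"
    using hom e unfolding palg_hom_def by auto
  ultimately have "h e = h (pzero S)"
    using mv_algebra_idempotent_nilpotent_eq_zero[OF mv] idem nilp by metis
  with inj e zero nonzero show False
    by (simp add: inj_on_def)
qed

lemma quot_op_classes:
  assumes eq: "equiv A \<theta>" and x: "x \<in> A" and y: "y \<in> A"
    and compat: "\<And>x x' y y'. (x, x') \<in> \<theta> \<Longrightarrow> (y, y') \<in> \<theta> \<Longrightarrow> (f x y, f x' y') \<in> \<theta>"
  shows "quot_op \<theta> f (\<theta> `` {x}) (\<theta> `` {y}) = \<theta> `` {f x y}"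
proof
  show "quot_op \<theta> f (\<theta> `` {x}) (\<theta> `` {y}) \<subseteq> \<theta> `` {f x y}"
  proof
    fix w assume "w \<in> quot_op \<theta> f (\<theta> `` {x}) (\<theta> `` {y})"
    then obtain x' y' where "(x, x') \<in> \<theta>" "(y, y') \<in> \<theta>" "(f x' y', w) \<in> \<theta>"
      unfolding quot_op_def by blast
    with compat eq show "w \<in> \<theta> `` {f x y}"
      unfolding equiv_def trans_def by blast
  qed
  have "(x, x) \<in> \<theta>" "(y, y) \<in> \<theta>"
    using eq x y unfolding equiv_def refl_on_def by auto
  then show "\<theta> `` {f x y} \<subseteq> quot_op \<theta> f (\<theta> `` {x}) (\<theta> `` {y})"
    unfolding quot_op_def by blast
qed

lemma palg_hom_quotient:
  assumes "palg_congruence S \<theta>"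
  shows "palg_hom S (palg_quotient S \<theta>) (\<lambda>x. \<theta> `` {x})"
proof -
  have eq: "equiv (pcarrier S) \<theta>"
    using assms by (simp add: palg_congruence_def)
  note classes = quot_op_classes[OF eq, of _ _ "pplus S"] quot_op_classes[OF eq, of _ _ "ptimes S"]
    quot_op_classes[OF eq, of _ _ "pjoin S"] quot_op_classes[OF eq, of _ _ "pmeet S"]
  show ?thesis
    using assms classes
    by (auto simp: palg_hom_def palg_quotient_def palg_congruence_def intro: quotientI)
qed

lemma chang_carrier_iff:
  "p \<in> chang_carrier \<longleftrightarrow> (fst p = 0 \<and> snd p \<ge> 0) \<or> (fst p = 1 \<and> snd p \<le> 0)"
  by (cases p) (auto simp: chang_carrier_def lex_le_def)

lemma chang_carrierE:
  assumes "x \<in> chang_carrier"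
  obtains n where "n \<ge> 0" "x = (0, n)" | n where "n \<ge> 0" "x = (1, - n)"
  using assms by (cases x) (auto simp: chang_carrier_iff, metis minus_minus)

lemma chang_oplus_Pair:
  "chang_oplus (a, b) (c, d) =
     (if a + c < 1 \<or> (a + c = 1 \<and> b + d \<le> 0) then (a + c, b + d) else (1, 0))"
  by (simp add: chang_oplus_def lex_le_def)

lemma chang_neg_Pair: "chang_neg (a, b) = (1 - a, - b)"
  by (simp add: chang_neg_def)

lemma mv_algebra_chang: "mv_algebra chang_carrier chang_oplus chang_neg (0, 0)"
  unfolding mv_algebra_def
  by (intro conjI ballI; (elim chang_carrierE)?;
      simp add: chang_carrier_iff chang_oplus_Pair chang_neg_Pair add.commute)

lemma chang_sub_iff: "p \<in> chang_sub \<longleftrightarrow> (fst p = 0 \<and> snd p \<ge> 0) \<or> p = (1, 0)"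
  unfolding chang_sub_def by (cases p) (auto elim: nonneg_int_cases)

lemma chang_subE:
  assumes "x \<in> chang_sub"
  obtains n where "n \<ge> 0" "x = (0, n)" | "x = (1, 0)"
  using assms by (cases x) (auto simp: chang_sub_iff)

lemma Chang_simps:
  "pcarrier Chang = chang_carrier" "pplus Chang = chang_oplus"
  "ptimes Chang x y = chang_neg (chang_oplus (chang_neg x) (chang_neg y))"
  "pjoin Chang x y = chang_oplus (chang_neg (chang_oplus (chang_neg x) y)) y"
  "pmeet Chang x y = chang_neg (chang_oplus (chang_neg (chang_oplus x (chang_neg y))) (chang_neg y))"
  "pzero Chang = (0, 0)" "pone Chang = (1, 0)"
  by (cases x, cases y; simp add: Chang_def chang_neg_Pair)+

lemma Chang_ops_chang_sub:
  "0 \<le> n \<Longrightarrow> 0 \<le> m \<Longrightarrow> pplus Chang (0, n) (0, m) = (0, n + m)"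
  "0 \<le> n \<Longrightarrow> pplus Chang (1, 0) (0, n) = (1, 0)"
  "0 \<le> n \<Longrightarrow> pplus Chang (0, n) (1, 0) = (1, 0)"
  "pplus Chang (1, 0) (1, 0) = (1, 0)"
  "0 \<le> n \<Longrightarrow> 0 \<le> m \<Longrightarrow> ptimes Chang (0, n) (0, m) = (0, 0)"
  "0 \<le> n \<Longrightarrow> ptimes Chang (0, n) (1, 0) = (0, n)"
  "0 \<le> n \<Longrightarrow> ptimes Chang (1, 0) (0, n) = (0, n)"
  "ptimes Chang (1, 0) (1, 0) = (1, 0)"
  "0 \<le> n \<Longrightarrow> 0 \<le> m \<Longrightarrow> pjoin Chang (0, n) (0, m) = (0, max n m)"
  "0 \<le> n \<Longrightarrow> pjoin Chang (0, n) (1, 0) = (1, 0)"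
  "0 \<le> n \<Longrightarrow> pjoin Chang (1, 0) (0, n) = (1, 0)"
  "pjoin Chang (1, 0) (1, 0) = (1, 0)"
  "0 \<le> n \<Longrightarrow> 0 \<le> m \<Longrightarrow> pmeet Chang (0, n) (0, m) = (0, min n m)"
  "0 \<le> n \<Longrightarrow> pmeet Chang (0, n) (1, 0) = (0, n)"
  "0 \<le> n \<Longrightarrow> pmeet Chang (1, 0) (0, n) = (0, n)"
  "pmeet Chang (1, 0) (1, 0) = (1, 0)"
  by (simp_all add: Chang_simps chang_oplus_Pair chang_neg_Pair max_def min_def)

lemma palg_closed_chang_sub: "palg_closed Chang chang_sub"
  unfolding palg_closed_def
  by (auto simp: Chang_simps(1,6,7) Chang_ops_chang_sub chang_sub_iff chang_carrier_iff
      elim!: chang_subE)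

lemma chang_theta_iff:
  "(p, q) \<in> chang_theta \<longleftrightarrow>
     (p = (0, 0) \<and> q = (0, 0)) \<or> (fst p = 0 \<and> snd p > 0 \<and> fst q = 0 \<and> snd q > 0) \<or>
     (p = (1, 0) \<and> q = (1, 0))"
  unfolding chang_theta_def by (cases p, cases q) (auto dest!: zero_less_imp_eq_int)

lemma chang_thetaE:
  assumes "(x, x') \<in> chang_theta"
  obtains "x = (0, 0)" "x' = (0, 0)"
    | n m where "n > 0" "m > 0" "x = (0, n)" "x' = (0, m)"
    | "x = (1, 0)" "x' = (1, 0)"
  using assms by (cases x; cases x') (auto simp: chang_theta_iff)

lemma palg_congruence_chang_theta: "palg_congruence (palg_sub Chang chang_sub) chang_theta"
  unfolding palg_congruence_def palg_sub_simps
proof (intro conjI allI impI)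
  show "equiv chang_sub chang_theta"
    unfolding equiv_def refl_on_def sym_def trans_def
    by (auto simp: chang_theta_iff chang_sub_iff)
  fix x x' y y' assume "(x, x') \<in> chang_theta" "(y, y') \<in> chang_theta"
  then show "(pplus Chang x y, pplus Chang x' y') \<in> chang_theta"
    and "(ptimes Chang x y, ptimes Chang x' y') \<in> chang_theta"
    and "(pjoin Chang x y, pjoin Chang x' y') \<in> chang_theta"
    and "(pmeet Chang x y, pmeet Chang x' y') \<in> chang_theta"
    by (elim chang_thetaE; simp add: Chang_ops_chang_sub chang_theta_iff max_def min_def)+
qed

lemma not_positive_MV_in_chang_quotient:
  "\<not> positive_MV_in TYPE('b) (palg_quotient (palg_sub Chang chang_sub) chang_theta)"
proof (rule not_positive_MV_in_if_idempotent_nilpotent)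
  let ?Q = "palg_quotient (palg_sub Chang chang_sub) chang_theta" and ?E = "chang_theta `` {(0, 1)}"
  have hom: "palg_hom (palg_sub Chang chang_sub) ?Q (\<lambda>x. chang_theta `` {x})"
    by (rule palg_hom_quotient[OF palg_congruence_chang_theta])
  have eps: "(0, 1) \<in> chang_sub" and zero: "(0, 0) \<in> chang_sub"
    by (simp_all add: chang_sub_iff)
  show "?E \<in> pcarrier ?Q" "pzero ?Q \<in> pcarrier ?Q"
    using eps zero by (auto simp: palg_quotient_def Chang_simps intro: quotientI)
  have "(0, 1) \<in> ?E" "(0, 1) \<notin> chang_theta `` {(0, 0)}"
    by (simp_all add: chang_theta_iff)
  then show "?E \<noteq> pzero ?Q"
    by (auto simp: palg_quotient_def Chang_simps)
  have "pplus ?Q ?E ?E = chang_theta `` {pplus Chang (0, 1) (0, 1)}"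
    using hom eps unfolding palg_hom_def by simp
  also have "\<dots> = chang_theta `` {(0, 2)}"
    by (simp add: Chang_ops_chang_sub)
  also have "\<dots> = ?E"
    by (auto simp: chang_theta_iff)
  finally show "pplus ?Q ?E ?E = ?E" .
  have "ptimes ?Q ?E ?E = chang_theta `` {ptimes Chang (0, 1) (0, 1)}"
    using hom eps unfolding palg_hom_def by simp
  also have "\<dots> = pzero ?Q"
    by (simp add: Chang_ops_chang_sub palg_quotient_def Chang_simps(6))
  finally show "ptimes ?Q ?E ?E = pzero ?Q" .
qed

theorem mainTheorem8:
  shows "mv_algebra chang_carrier chang_oplus chang_neg (0, 0)
    \<and> palg_closed Chang chang_sub
    \<and> positive_MV_in TYPE(int \<times> int) (palg_sub Chang chang_sub)
    \<and> palg_congruence (palg_sub Chang chang_sub) chang_theta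
    \<and> palg_hom (palg_sub Chang chang_sub) (palg_quotient (palg_sub Chang chang_sub) chang_theta)
        (\<lambda>x. chang_theta `` {x})
    \<and> \<not> positive_MV_in TYPE('b) (palg_quotient (palg_sub Chang chang_sub) chang_theta)"
proof (intro conjI)
  show "positive_MV_in TYPE(int \<times> int) (palg_sub Chang chang_sub)"
    using positive_MV_in_mv_subalgebra[OF palg_closed_chang_sub[unfolded Chang_def] mv_algebra_chang]
    unfolding Chang_def .
qed (simp_all add: mv_algebra_chang palg_closed_chang_sub palg_congruence_chang_theta
      palg_hom_quotient not_positive_MV_in_chang_quotient)

end
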